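(* Let $\omega=\omega_0\omega_1\cdots$ be an infinite sequence over $\{b,c,d\}$ which is not eventually constant. Then for each $n\ge0$ there is a nontrivial element $t\in\mathrm{Rist}_{G_\omega}(1^n)$ with word length at most $2^{n+2}$ with respect to the generators $a,b,c,d$.
   Context: Let $\mathbf{T}=\{0,1\}^*$ be the rooted binary tree of finite binary strings, and $a$ the automorphism flipping the first bit of a string ($a$ fixes the empty string). For each $x\in\{b,c,d\}$ and $n\ge0$, the automorphism $x_n$ is defined by $x_n(1^j)=1^j$ for all $j\ge0$, and $x_n(1^j0s)=1^j0s$ if $\omega_{n+j}=x$, $x_n(1^j0s)=1^j0a(s)$ if $\omega_{n+j}\ne x$, for all $j\ge0$ and strings $s$. Write $b=b_0,c=c_0,d=d_0$; the generalized Grigorchuk group is $G_\omega=\langle a,b,c,d\rangle$. For a string $s$, $\mathrm{Rist}(s)$ is the group of automorphisms of $\mathbf{T}$ fixing every string not beginning with $s$, and $\mathrm{Rist}_{G_\omega}(s)=G_\omega\cap\mathrm{Rist}(s)$. *)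

theory Defs
  imports Main "HOL-Library.Sublist"
begin

text \<open>Vertices of the binary tree: finite binary strings; False = 0, True = 1.\<close>

datatype letter = LB | LC | LD

datatype gen = GA | GB | GC | GD

fun flip :: "bool list \<Rightarrow> bool list" where
  "flip [] = []"
| "flip (x # s) = (\<not> x) # s"

fun xgen :: "(nat \<Rightarrow> letter) \<Rightarrow> letter \<Rightarrow> nat \<Rightarrow> bool list \<Rightarrow> bool list" where
  "xgen w x n [] = []"
| "xgen w x n (True # s) = True # xgen w x (Suc n) s"
| "xgen w x n (False # s) = False # (if w n = x then s else flip s)"

fun gen_act :: "(nat \<Rightarrow> letter) \<Rightarrow> gen \<Rightarrow> bool list \<Rightarrow> bool list" where
  "gen_act w GA = flip"
| "gen_act w GB = xgen w LB 0"
| "gen_act w GC = xgen w LC 0"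
| "gen_act w GD = xgen w LD 0"

text \<open>Evaluation of a word in the generators (generators are involutions,
  so words over a,b,c,d describe all of G_omega).\<close>
definition word_eval :: "(nat \<Rightarrow> letter) \<Rightarrow> gen list \<Rightarrow> bool list \<Rightarrow> bool list" where
  "word_eval w ws = foldr (\<lambda>g f. gen_act w g \<circ> f) ws id"

definition in_rist :: "bool list \<Rightarrow> (bool list \<Rightarrow> bool list) \<Rightarrow> bool" where
  "in_rist s t \<longleftrightarrow> (\<forall>v. \<not> prefix s v \<longrightarrow> t v = v)"

definition eventually_constant :: "(nat \<Rightarrow> 'a) \<Rightarrow> bool" where
  "eventually_constant w \<longleftrightarrow> (\<exists>N x. \<forall>m\<ge>N. w m = x)"

end

theory Submission imports Defs begin

text \<open>Every automorphism g fixing the root is a pair (g0, g1) of automorphisms of the two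
  subtrees; a generator x at level m is (e, x') with e in {1, a} and x' the same generator
  at level m + 1, and a (g0, g1) a = (g1, g0). Substituting a z a for every a, where z is
  a generator whose letter differs from \<omega>(m), turns a word B acting at level m + 1 into a
  word acting at level m as (B', B), where B' arises from B by replacing a by z and every
  other generator by 1 or a. Starting from a and iterating n times gives a palindromic word
  B of length 2^(n+1) - 1, and t = x B x B with x the generator of letter \<omega>(n-1) is the
  candidate. At level n it is (e x', x' e), nontrivial because \<omega> is not eventually
  constant. At a level m < n its 0-section is e B' e B': trivial when e = 1, as B' is an
  involution; otherwise \<omega>(m) differs from \<omega>(n-1), so the letter \<omega>(m) is substituted at
  the first later position where \<omega> changes, which makes B' commute with a. Hence
  t = (1, (1, ... (1, t') ...)) with t' nontrivial.\<close>

definition pair_aut ::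
  "(bool list \<Rightarrow> bool list) \<Rightarrow> (bool list \<Rightarrow> bool list) \<Rightarrow> bool list \<Rightarrow> bool list" where
  "pair_aut f0 f1 s = (case s of [] \<Rightarrow> [] | b # r \<Rightarrow> b # (if b then f1 r else f0 r))"

lemma pair_aut_simps [simp]:
  "pair_aut f0 f1 [] = []"
  "pair_aut f0 f1 (True # r) = True # f1 r"
  "pair_aut f0 f1 (False # r) = False # f0 r"
  by (simp_all add: pair_aut_def)

lemma pair_aut_comp: "pair_aut f0 f1 \<circ> pair_aut g0 g1 = pair_aut (f0 \<circ> g0) (f1 \<circ> g1)"
proof
  fix s show "(pair_aut f0 f1 \<circ> pair_aut g0 g1) s = pair_aut (f0 \<circ> g0) (f1 \<circ> g1) s"
    by (cases s) (auto simp: pair_aut_def)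
qed

lemma pair_aut_eq_id_iff: "pair_aut f0 f1 = id \<longleftrightarrow> f0 = id \<and> f1 = id"
proof
  assume h: "pair_aut f0 f1 = id"
  have "f0 r = r" for r using fun_cong[OF h, of "False # r"] by simp
  moreover have "f1 r = r" for r using fun_cong[OF h, of "True # r"] by simp
  ultimately show "f0 = id \<and> f1 = id" by auto
next
  assume "f0 = id \<and> f1 = id"
  then show "pair_aut f0 f1 = id" by (auto simp: pair_aut_def fun_eq_iff split: list.split)
qed

lemma flip_conj_pair_aut: "flip \<circ> pair_aut f0 f1 \<circ> flip = pair_aut f1 f0"
proof
  fix s show "(flip \<circ> pair_aut f0 f1 \<circ> flip) s = pair_aut f1 f0 s"
    by (cases s) (auto simp: pair_aut_def)
qed

lemma flip_flip: "flip \<circ> flip = id"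
proof
  fix s show "(flip \<circ> flip) s = id s" by (cases s) auto
qed

lemma xgen_eq_pair_aut: "xgen w x n = pair_aut (if w n = x then id else flip) (xgen w x (Suc n))"
proof
  fix s show "xgen w x n s = pair_aut (if w n = x then id else flip) (xgen w x (Suc n)) s"
    by (cases s) (auto simp: pair_aut_def)
qed

lemma xgen_involution: "xgen w x n \<circ> xgen w x n = id"
proof
  fix s show "(xgen w x n \<circ> xgen w x n) s = id s"
  proof (induction s arbitrary: n)
    case (Cons b s) then show ?case using fun_cong[OF flip_flip, of s] by (cases b) auto
  qed simp
qed

lemma xgen_replicate_True_False:
  "w (m + d) \<noteq> x \<Longrightarrow>
    xgen w x m (replicate d True @ [False, False]) = replicate d True @ [False, True]"
proof (induction d arbitrary: m)
  case (Suc d) then show ?case by (simp add: add_Suc_right[symmetric] del: add_Suc_right)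
qed simp

lemma xgen_neq_id: "j \<ge> m \<Longrightarrow> w j \<noteq> x \<Longrightarrow> xgen w x m \<noteq> id"
  using xgen_replicate_True_False[of w m "j - m" x] by auto

lemma in_rist_Nil: "in_rist [] f"
  by (simp add: in_rist_def)

lemma in_rist_pair_aut_id: "in_rist s f \<Longrightarrow> in_rist (True # s) (pair_aut id f)"
  unfolding in_rist_def
proof (intro allI impI)
  fix v assume fix_f: "\<forall>v. \<not> prefix s v \<longrightarrow> f v = v" and np: "\<not> prefix (True # s) v"
  show "pair_aut id f v = v"
  proof (cases v)
    case (Cons b r) then show ?thesis using fix_f np by (cases b) auto
  qed simp
qed

text \<open>The value on GA is junk: gen_letter is only used for b, c, d.\<close>
fun gen_letter :: "gen \<Rightarrow> letter" where
  "gen_letter GA = LB" | "gen_letter GB = LB" | "gen_letter GC = LC" | "gen_letter GD = LD"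

fun letter_gen :: "letter \<Rightarrow> gen" where
  "letter_gen LB = GB" | "letter_gen LC = GC" | "letter_gen LD = GD"

fun next_letter :: "letter \<Rightarrow> letter" where
  "next_letter LB = LC" | "next_letter LC = LD" | "next_letter LD = LB"

lemma gen_letter_letter_gen [simp]: "gen_letter (letter_gen x) = x"
  by (cases x) auto

lemma letter_gen_neq_GA [simp]: "letter_gen x \<noteq> GA"
  by (cases x) auto

lemma next_letter_neq [simp]: "next_letter x \<noteq> x"
  by (cases x) auto

text \<open>The generators of the group of the shifted sequence \<omega>(m) \<omega>(m+1) ..., i.e. the
  sections of the generators at the vertex 1^m.\<close>
definition gen_act_at :: "(nat \<Rightarrow> letter) \<Rightarrow> nat \<Rightarrow> gen \<Rightarrow> bool list \<Rightarrow> bool list" where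
  "gen_act_at w m g = (if g = GA then flip else xgen w (gen_letter g) m)"

definition word_eval_at :: "(nat \<Rightarrow> letter) \<Rightarrow> nat \<Rightarrow> gen list \<Rightarrow> bool list \<Rightarrow> bool list" where
  "word_eval_at w m ws = foldr (\<lambda>g f. gen_act_at w m g \<circ> f) ws id"

lemma word_eval_at_Nil [simp]: "word_eval_at w m [] = id"
  by (simp add: word_eval_at_def)

lemma word_eval_at_Cons [simp]: "word_eval_at w m (g # ws) = gen_act_at w m g \<circ> word_eval_at w m ws"
  by (simp add: word_eval_at_def)

lemma word_eval_at_append:
  "word_eval_at w m (xs @ ys) = word_eval_at w m xs \<circ> word_eval_at w m ys"
  by (induction xs) (auto simp: o_assoc)

lemma word_eval_eq_word_eval_at_0: "word_eval w ws = word_eval_at w 0 ws"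
proof (induction ws)
  case (Cons g ws)
  have "gen_act w g = gen_act_at w 0 g" by (cases g) (auto simp: gen_act_at_def)
  with Cons show ?case by (simp add: word_eval_def)
qed (simp add: word_eval_def)

lemma gen_act_at_involution: "gen_act_at w m g \<circ> gen_act_at w m g = id"
  by (simp add: gen_act_at_def flip_flip xgen_involution)

lemma word_eval_at_rev_inverse: "word_eval_at w m (rev ws) \<circ> word_eval_at w m ws = id"
proof (induction ws)
  case (Cons g ws)
  have "word_eval_at w m (rev (g # ws)) \<circ> word_eval_at w m (g # ws)
      = word_eval_at w m (rev ws) \<circ> (gen_act_at w m g \<circ> gen_act_at w m g) \<circ> word_eval_at w m ws"
    by (simp add: word_eval_at_append o_assoc)
  then show ?case by (simp only: gen_act_at_involution comp_id Cons.IH)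
qed simp

definition expand_a :: "gen \<Rightarrow> gen list \<Rightarrow> gen list" where
  "expand_a z ws = concat (map (\<lambda>g. if g = GA then [GA, z, GA] else [g]) ws)"

lemma expand_a_Nil [simp]: "expand_a z [] = []"
  by (simp add: expand_a_def)

lemma expand_a_Cons [simp]:
  "expand_a z (g # ws) = (if g = GA then [GA, z, GA] else [g]) @ expand_a z ws"
  by (simp add: expand_a_def)

lemma rev_expand_a: "rev (expand_a z ws) = expand_a z (rev ws)"
  by (induction ws) (auto simp: expand_a_def)

lemma length_expand_a:
  "length (expand_a z ws) = length ws + 2 * length (filter (\<lambda>g. g = GA) ws)"
  by (induction ws) auto

lemma count_GA_expand_a:
  "z \<noteq> GA \<Longrightarrow> length (filter (\<lambda>g. g = GA) (expand_a z ws)) = 2 * length (filter (\<lambda>g. g = GA) ws)"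
  by (induction ws) auto

text \<open>The 0-section of a generator b, c, d at a level where \<omega> reads x.\<close>
definition letter_flip :: "letter \<Rightarrow> gen \<Rightarrow> bool list \<Rightarrow> bool list" where
  "letter_flip x g = (if gen_letter g = x then id else flip)"

definition eval_subst :: "(bool list \<Rightarrow> bool list) \<Rightarrow> letter \<Rightarrow> gen list \<Rightarrow> bool list \<Rightarrow> bool list" where
  "eval_subst c x ws = foldr (\<lambda>g f. (if g = GA then c else letter_flip x g) \<circ> f) ws id"

lemma eval_subst_Nil [simp]: "eval_subst c x [] = id"
  by (simp add: eval_subst_def)

lemma eval_subst_Cons [simp]:
  "eval_subst c x (g # ws) = (if g = GA then c else letter_flip x g) \<circ> eval_subst c x ws"
  by (simp add: eval_subst_def)

lemma eval_subst_append: "eval_subst c x (xs @ ys) = eval_subst c x xs \<circ> eval_subst c x ys"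
  by (induction xs) (auto simp: o_assoc)

lemma eval_subst_expand_a:
  "z \<noteq> GA \<Longrightarrow> eval_subst c x (expand_a z ws) = eval_subst (c \<circ> letter_flip x z \<circ> c) x ws"
  by (induction ws) (auto simp: eval_subst_append o_assoc)

lemma word_eval_at_expand_a:
  assumes "z \<noteq> GA" "gen_letter z \<noteq> w m"
  shows "word_eval_at w m (expand_a z ws)
    = pair_aut (eval_subst (gen_act_at w (Suc m) z) (w m) ws) (word_eval_at w (Suc m) ws)"
proof (induction ws)
  case Nil then show ?case by (metis pair_aut_eq_id_iff word_eval_at_Nil eval_subst_Nil expand_a_Nil)
next
  case (Cons g ws)
  have piece: "word_eval_at w m (if g = GA then [GA, z, GA] else [g])
      = pair_aut (if g = GA then gen_act_at w (Suc m) z else letter_flip (w m) g)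
                 (gen_act_at w (Suc m) g)"
  proof (cases "g = GA")
    case True
    have "flip \<circ> (xgen w (gen_letter z) m \<circ> flip) = flip \<circ> xgen w (gen_letter z) m \<circ> flip"
      by (simp add: o_assoc)
    also have "\<dots> = pair_aut (xgen w (gen_letter z) (Suc m)) flip"
      using assms by (subst xgen_eq_pair_aut) (simp add: flip_conj_pair_aut)
    finally show ?thesis using True assms by (simp add: gen_act_at_def)
  next
    case False
    then show ?thesis
      using xgen_eq_pair_aut[of w "gen_letter g" m] by (auto simp: gen_act_at_def letter_flip_def)
  qed
  show ?case
    by (simp only: expand_a_Cons word_eval_at_append piece Cons pair_aut_comp eval_subst_Cons
        word_eval_at_Cons)
qed

definition commutes_flip :: "(bool list \<Rightarrow> bool list) \<Rightarrow> bool" where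
  "commutes_flip f \<longleftrightarrow> f \<circ> flip = flip \<circ> f"

lemma commutes_flip_comp: "commutes_flip f \<Longrightarrow> commutes_flip g \<Longrightarrow> commutes_flip (f \<circ> g)"
  by (simp add: commutes_flip_def) (metis comp_assoc)

lemma commutes_flip_letter_flip: "commutes_flip (letter_flip x g)"
  by (simp add: letter_flip_def commutes_flip_def)

lemma commutes_flip_eval_subst: "commutes_flip c \<Longrightarrow> commutes_flip (eval_subst c x ws)"
proof (induction ws)
  case (Cons g ws)
  have "commutes_flip (if g = GA then c else letter_flip x g)"
    using Cons.prems commutes_flip_letter_flip by simp
  then show ?case using Cons eval_subst_Cons commutes_flip_comp by metis
qed (simp add: commutes_flip_def)

lemma involution_conj: "c \<circ> c = id \<Longrightarrow> e \<circ> e = id \<Longrightarrow> (c \<circ> e \<circ> c) \<circ> (c \<circ> e \<circ> c) = id"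
  by (simp add: fun_eq_iff)

lemma letter_flip_involution: "letter_flip x g \<circ> letter_flip x g = id"
  by (simp add: letter_flip_def flip_flip)

text \<open>The generator substituted at level m must avoid the letter \<omega>(m); taking \<omega>(m-1) when
  \<omega> changes at m makes every letter change of \<omega> visible in the substitutions.\<close>
definition conj_gen :: "(nat \<Rightarrow> letter) \<Rightarrow> nat \<Rightarrow> gen" where
  "conj_gen w m = letter_gen (if 0 < m \<and> w (m - 1) \<noteq> w m then w (m - 1) else next_letter (w m))"

lemma conj_gen_neq_GA: "conj_gen w m \<noteq> GA"
  by (simp add: conj_gen_def)

lemma gen_letter_conj_gen_neq: "gen_letter (conj_gen w m) \<noteq> w m"
  by (simp add: conj_gen_def)

lemma exists_conj_gen_letter:
  assumes "m < n" "w m \<noteq> w (n - 1)"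
  shows "\<exists>i. Suc m \<le> i \<and> i < n \<and> gen_letter (conj_gen w i) = w m"
proof -
  let ?change = "\<lambda>i. m < i \<and> w i \<noteq> w m"
  define i where "i = (LEAST i. ?change i)"
  have "?change (n - 1)" using assms by (cases "m = n - 1") auto
  then have change: "?change i" and le: "i \<le> n - 1"
    unfolding i_def by (rule LeastI, rule Least_le)
  have "\<not> ?change (i - 1)"
    using change unfolding i_def by (intro not_less_Least) (simp add: i_def)
  then have "w (i - 1) = w m"
    using change by (cases "i - 1 = m") auto
  then have "conj_gen w i = letter_gen (w m)" using change by (auto simp: conj_gen_def)
  then show ?thesis using change le assms(1) by (intro exI[of _ i]) auto
qed

fun tower :: "(nat \<Rightarrow> letter) \<Rightarrow> nat \<Rightarrow> nat \<Rightarrow> gen list" where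
  "tower w 0 m = [GA]"
| "tower w (Suc k) m = expand_a (conj_gen w m) (tower w k (Suc m))"

lemma rev_tower: "rev (tower w k m) = tower w k m"
  by (induction k arbitrary: m) (auto simp: rev_expand_a)

lemma tower_involution: "word_eval_at w m (tower w k m) \<circ> word_eval_at w m (tower w k m) = id"
  using word_eval_at_rev_inverse[of w m "tower w k m"] by (simp add: rev_tower)

lemma length_tower: "length (tower w k m) + 1 = 2 ^ (k + 1)"
proof -
  have "length (filter (\<lambda>g. g = GA) (tower w k m)) = 2 ^ k
      \<and> length (tower w k m) + 1 = 2 ^ (k + 1)"
    by (induction k arbitrary: m)
       (auto simp: length_expand_a count_GA_expand_a conj_gen_neq_GA)
  then show ?thesis ..
qed

lemma commutes_flip_eval_subst_tower:
  assumes "c \<circ> c = id" "m \<le> i" "i < m + k" "gen_letter (conj_gen w i) = x"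
  shows "commutes_flip (eval_subst c x (tower w k m))"
  using assms
proof (induction k arbitrary: c m)
  case (Suc k)
  let ?e = "letter_flip x (conj_gen w m)"
  have subst: "eval_subst c x (tower w (Suc k) m) = eval_subst (c \<circ> ?e \<circ> c) x (tower w k (Suc m))"
    by (simp add: eval_subst_expand_a conj_gen_neq_GA)
  show ?case
  proof (cases "gen_letter (conj_gen w m) = x")
    case True
    then have "c \<circ> ?e \<circ> c = id"
      by (simp only: letter_flip_def simp_thms if_True comp_id Suc.prems(1))
    moreover have "commutes_flip id" by (simp add: commutes_flip_def)
    ultimately show ?thesis using subst commutes_flip_eval_subst by metis
  next
    case False
    then have "Suc m \<le> i" "i < Suc m + k" using Suc.prems by (auto simp: le_less)
    moreover have "(c \<circ> ?e \<circ> c) \<circ> (c \<circ> ?e \<circ> c) = id"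
      by (rule involution_conj[OF Suc.prems(1) letter_flip_involution])
    ultimately show ?thesis unfolding subst using Suc.IH Suc.prems(4) by blast
  qed
qed simp

lemma commutator_tower_base:
  assumes "x \<noteq> GA" "\<exists>j \<ge> Suc n. w j \<noteq> gen_letter x"
  shows "word_eval_at w n (x # tower w 0 n @ x # tower w 0 n) \<noteq> id"
proof -
  let ?X = "xgen w (gen_letter x) (Suc n)"
  let ?e = "if w n = gen_letter x then id else flip"
  have "gen_act_at w n x = pair_aut ?e ?X"
    using assms(1) xgen_eq_pair_aut[of w "gen_letter x" n] by (simp add: gen_act_at_def)
  then have "word_eval_at w n (x # tower w 0 n @ x # tower w 0 n)
      = pair_aut ?e ?X \<circ> (flip \<circ> pair_aut ?e ?X \<circ> flip)"
    by (simp add: gen_act_at_def o_assoc)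
  also have "\<dots> = pair_aut (?e \<circ> ?X) (?X \<circ> ?e)"
    by (simp add: flip_conj_pair_aut pair_aut_comp)
  finally have eq: "word_eval_at w n (x # tower w 0 n @ x # tower w 0 n)
      = pair_aut (?e \<circ> ?X) (?X \<circ> ?e)" .
  have "?e \<circ> ?X \<noteq> id"
  proof (cases "w n = gen_letter x")
    case True
    then show ?thesis using assms(2) xgen_neq_id[of "Suc n" _ w "gen_letter x"] by auto
  next
    case False
    then have "(?e \<circ> ?X) [False] \<noteq> id [False]" by simp
    then show ?thesis by metis
  qed
  then show ?thesis unfolding eq pair_aut_eq_id_iff by blast
qed

lemma commutator_tower_step:
  assumes "x \<noteq> GA" "gen_letter x = w (n - 1)" "Suc m + k = n"
  shows "word_eval_at w m (x # tower w (Suc k) m @ x # tower w (Suc k) m)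
    = pair_aut id (word_eval_at w (Suc m) (x # tower w k (Suc m) @ x # tower w k (Suc m)))"
proof -
  let ?e = "if w m = gen_letter x then id else flip"
  let ?s = "eval_subst (gen_act_at w (Suc m) (conj_gen w m)) (w m) (tower w k (Suc m))"
  let ?B = "word_eval_at w (Suc m) (tower w k (Suc m))"
  have gx: "gen_act_at w m x = pair_aut ?e (gen_act_at w (Suc m) x)"
    using assms(1) xgen_eq_pair_aut[of w "gen_letter x" m] by (simp add: gen_act_at_def)
  have tower_pair: "word_eval_at w m (tower w (Suc k) m) = pair_aut ?s ?B"
    by (simp add: word_eval_at_expand_a conj_gen_neq_GA gen_letter_conj_gen_neq)
  have "pair_aut (?s \<circ> ?s) (?B \<circ> ?B) = id"
    using tower_involution[of w m "Suc k"] unfolding tower_pair pair_aut_comp .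
  then have ss: "?s \<circ> ?s = id" by (simp add: pair_aut_eq_id_iff)
  have zero_section: "?e \<circ> ?s \<circ> ?e \<circ> ?s = id"
  proof (cases "w m = gen_letter x")
    case True then show ?thesis using ss by (simp add: o_assoc)
  next
    case False
    then obtain i where "Suc m \<le> i" "i < Suc m + k" "gen_letter (conj_gen w i) = w m"
      using exists_conj_gen_letter[of m n w] assms by auto
    then have "commutes_flip ?s"
      by (intro commutes_flip_eval_subst_tower gen_act_at_involution)
    then have "flip \<circ> ?s \<circ> flip \<circ> ?s = (flip \<circ> flip) \<circ> (?s \<circ> ?s)"
      by (simp add: commutes_flip_def comp_assoc)
    then show ?thesis using False by (simp add: ss flip_flip)
  qed
  have "word_eval_at w m (x # tower w (Suc k) m @ x # tower w (Suc k) m)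
      = pair_aut (?e \<circ> ?s \<circ> ?e \<circ> ?s)
          (gen_act_at w (Suc m) x \<circ> ?B \<circ> gen_act_at w (Suc m) x \<circ> ?B)"
    by (simp only: word_eval_at_Cons word_eval_at_append gx tower_pair pair_aut_comp comp_assoc)
  then show ?thesis
    using zero_section by (simp add: word_eval_at_append comp_assoc)
qed

lemma commutator_tower:
  assumes "x \<noteq> GA" "gen_letter x = w (n - 1)" "\<exists>j \<ge> Suc n. w j \<noteq> gen_letter x"
    and "m + k = n"
  shows "word_eval_at w m (x # tower w k m @ x # tower w k m) \<noteq> id
    \<and> in_rist (replicate k True) (word_eval_at w m (x # tower w k m @ x # tower w k m))"
  using assms(4)
proof (induction k arbitrary: m)
  case 0
  then have "m = n" by simp
  then show ?case
    using commutator_tower_base[OF assms(1,3)] in_rist_Nil unfolding replicate_0 by blast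
next
  case (Suc k)
  then have "Suc m + k = n" by simp
  from Suc.IH[OF this] show ?case
    unfolding commutator_tower_step[of x w n m k, OF assms(1,2) \<open>Suc m + k = n\<close>] replicate_Suc
    using pair_aut_eq_id_iff in_rist_pair_aut_id by blast
qed

theorem lemma6p3:
  fixes w :: "nat \<Rightarrow> letter" and n :: nat
  assumes "\<not> eventually_constant w"
  shows "\<exists>ws :: gen list. length ws \<le> 2 ^ (n + 2)
           \<and> word_eval w ws \<noteq> id
           \<and> in_rist (replicate n True) (word_eval w ws)"
proof -
  define x where "x = letter_gen (w (n - 1))"
  define B where "B = tower w n 0"
  have x: "x \<noteq> GA" "gen_letter x = w (n - 1)" by (simp_all add: x_def)
  have "\<exists>j \<ge> Suc n. w j \<noteq> gen_letter x"
    using assms by (auto simp: eventually_constant_def)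
  then have "word_eval w (x # B @ x # B) \<noteq> id
      \<and> in_rist (replicate n True) (word_eval w (x # B @ x # B))"
    using commutator_tower[of x w n 0 n, OF x] by (simp add: B_def word_eval_eq_word_eval_at_0)
  moreover have "length (x # B @ x # B) = 2 ^ (n + 2)"
    using length_tower[of w n 0] by (simp add: B_def)
  ultimately show ?thesis by (metis order_refl)
qed

end
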